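(* Let $\Lambda\in\mathbb{R}^{n\times n}$ be diagonal with entries $\lambda_{ii}\in[0,1]$, let $W^{(1)},W^{(2)}\in\mathbb{R}^{n\times n}$ be entrywise nonnegative with $W^{(1)}+W^{(2)}$ row-stochastic, and $s\in\mathbb{R}^n$. Consider the FJ-MM system $$x(t+1)=\Lambda\big(W^{(1)}x(t)+W^{(2)}x(t-1)\big)+(I-\Lambda)s \tag{A}$$ and the comparison FJ system $$x(t+1)=\bar A x(t)+(I-\Lambda)s,\qquad \bar A:=\Lambda\big(W^{(1)}+W^{(2)}\big). \tag{B}$$ The following are equivalent: (i) system (A) is exponentially stable, i.e. $\rho(\bar A_d)<1$ where $\bar A_d:=\begin{pmatrix}0 & I\\ \Lambda W^{(2)} & \Lambda W^{(1)}\end{pmatrix}\in\mathbb{R}^{2n\times 2n}$; (ii) system (B) is exponentially stable, i.e. $\rho(\bar A)<1$; (iii) the set $\hat{\mathcal V}:=\{i:\lambda_{ii}<1\}$ is non-empty and globally reachable in the directed graph $\mathcal G[W^{(1)}+W^{(2)}]$ (in particular this holds if $\lambda_{ii}<1$ for all $i$). Moreover, if (i)–(iii) hold, then $I-\bar A$ is invertible and every solution of (A) (for any initial data $x(-1),x(0)$) and every solution of (B) converges to $$\bar x=(I-\bar A)^{-1}(I-\Lambda)s,$$ which is the unique equilibrium of both systems.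
   Context: $\rho(M)$ denotes the spectral radius. For an entrywise nonnegative $n\times n$ matrix $W=(w_{ij})$, $\mathcal G[W]$ is the directed graph on nodes $\{1,\dots,n\}$ with an edge $(i,j)$ iff $w_{ij}>0$. A set of nodes $S$ is globally reachable if from every node there is a directed walk (possibly of length zero) to some node of $S$. System (A) is equivalent to $y(t)=\bar A_d y(t-1)+\begin{pmatrix}0\\(I-\Lambda)s\end{pmatrix}$ with $y(t-1)=(x(t-1)^\top,x(t)^\top)^\top$. *)

theory Defs
  imports "Jordan_Normal_Form.Spectral_Radius" "Jordan_Normal_Form.Gauss_Jordan_Elimination"
begin

definition graph_edges :: "nat \<Rightarrow> real mat \<Rightarrow> (nat \<times> nat) set" where
  "graph_edges n W = {(i,j). i < n \<and> j < n \<and> W $$ (i,j) > 0}"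

definition globally_reachable :: "nat \<Rightarrow> real mat \<Rightarrow> nat set \<Rightarrow> bool" where
  "globally_reachable n W S \<longleftrightarrow> (\<forall>i<n. \<exists>j\<in>S. (i,j) \<in> (graph_edges n W)\<^sup>*)"

definition row_stochastic :: "nat \<Rightarrow> real mat \<Rightarrow> bool" where
  "row_stochastic n W \<longleftrightarrow> (\<forall>i<n. (\<Sum>j<n. W $$ (i,j)) = 1)"

definition nonneg_mat :: "real mat \<Rightarrow> bool" where
  "nonneg_mat W \<longleftrightarrow> (\<forall>i<dim_row W. \<forall>j<dim_col W. W $$ (i,j) \<ge> 0)"

definition rho :: "real mat \<Rightarrow> real" where
  "rho A = spectral_radius (map_mat complex_of_real A)"

definition Abar :: "real mat \<Rightarrow> real mat \<Rightarrow> real mat \<Rightarrow> real mat" where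
  "Abar L W1 W2 = L * (W1 + W2)"

definition Abar_d :: "nat \<Rightarrow> real mat \<Rightarrow> real mat \<Rightarrow> real mat \<Rightarrow> real mat" where
  "Abar_d n L W1 W2 = four_block_mat (0\<^sub>m n n) (1\<^sub>m n) (L * W2) (L * W1)"

end

theory Submission
  imports Defs
begin

(*
  Write A = L (W1 + W2) for the comparison matrix: it is nonnegative with row sums L_ii <= 1.
  Let u_k = A^k 1 be the row sums of its powers. If every node reaches a node with L_ii < 1,
  every u_k(i) eventually drops below 1, and substochasticity makes u_k decay geometrically.
  A nonnegative sequence with p(t+2) <= L W1 p(t+1) + L W2 p(t) costs at least one factor A
  every two steps, so it is dominated by C u_(t div 2) and tends to 0. Applied to
  |mu|^t |w| for an eigenpair of A or of the block matrix Ad, this gives both spectral radii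
  below 1; applied to the distance of a trajectory from a fixed point, it gives convergence,
  uniqueness of the equilibrium and the invertibility of I - A.
  Conversely, if some node reaches no node with L_ii < 1, the indicator v of the set it
  reaches is a nonnegative vector with v <= A v (and likewise for Ad), which is incompatible
  with a spectral radius below 1.
*)

lemma mult_mat_vec_index_sum:
  fixes M :: "'a :: comm_semiring_0 mat"
  assumes "M \<in> carrier_mat m n" "y \<in> carrier_vec n" "i < m"
  shows "(M *\<^sub>v y) $ i = (\<Sum>j<n. M $$ (i,j) * y $ j)"
  using assms by (auto simp: scalar_prod_def lessThan_atLeast0 intro!: sum.cong)

lemma diagonal_mat_mult_vec_index:
  fixes L :: "'a :: comm_semiring_0 mat"
  assumes L: "L \<in> carrier_mat n n" and "diagonal_mat L" and y: "y \<in> carrier_vec n" and i: "i < n"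
  shows "(L *\<^sub>v y) $ i = L $$ (i,i) * y $ i"
proof -
  have "(L *\<^sub>v y) $ i = (\<Sum>j<n. if j = i then L $$ (i,i) * y $ i else 0)"
    unfolding mult_mat_vec_index_sum[OF L y i]
    using assms unfolding diagonal_mat_def by (intro sum.cong) auto
  then show ?thesis using i by simp
qed

lemma diagonal_mat_mult_index:
  fixes L :: "'a :: comm_semiring_0 mat"
  assumes L: "L \<in> carrier_mat n n" and "diagonal_mat L" and W: "W \<in> carrier_mat n n"
    and i: "i < n" and j: "j < n"
  shows "(L * W) $$ (i,j) = L $$ (i,i) * W $$ (i,j)"
proof -
  have "(L * W) $$ (i,j) = (L *\<^sub>v col W j) $ i" using L W i j by simp
  also have "\<dots> = L $$ (i,i) * W $$ (i,j)"
    using W i j by (subst diagonal_mat_mult_vec_index[OF L \<open>diagonal_mat L\<close> _ i]) auto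
  finally show ?thesis .
qed

lemma of_real_mult_vec_index:
  fixes M :: "real mat" and z :: "complex vec"
  assumes "M \<in> carrier_mat n n" "z \<in> carrier_vec n" "i < n" and "\<And>j. j < n \<Longrightarrow> M $$ (i,j) = c j"
  shows "(map_mat of_real M *\<^sub>v z) $ i = (\<Sum>j<n. of_real (c j) * z $ j)"
  using mult_mat_vec_index_sum[of "map_mat of_real M" n n z i] assms by simp

lemma companion_block_mult_vec:
  fixes A21 A22 :: "'a :: comm_ring_1 mat"
  assumes "A21 \<in> carrier_mat n n" "A22 \<in> carrier_mat n n" "a \<in> carrier_vec n" "b \<in> carrier_vec n"
  shows "four_block_mat (0\<^sub>m n n) (1\<^sub>m n) A21 A22 *\<^sub>v (a @\<^sub>v b) = b @\<^sub>v (A21 *\<^sub>v a + A22 *\<^sub>v b)"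
  using assms by (subst four_block_mat_mult_vec[of _ n n _ n _ n]) auto

lemma smult_append_vec:
  "a \<in> carrier_vec n \<Longrightarrow> b \<in> carrier_vec m \<Longrightarrow> c \<cdot>\<^sub>v (a @\<^sub>v b) = (c \<cdot>\<^sub>v a) @\<^sub>v (c \<cdot>\<^sub>v b)"
  by (rule eq_vecI) (auto simp: index_append_vec)

lemma nonzero_vec_index:
  assumes "w \<in> carrier_vec n" "w \<noteq> 0\<^sub>v n"
  obtains i where "i < n" "w $ i \<noteq> 0"
  using assms by (metis eq_vecI carrier_vecD index_zero_vec)

lemma norm_sum_of_real_mult_le:
  fixes z :: "'b \<Rightarrow> 'a :: real_normed_div_algebra"
  assumes "\<And>j. j \<in> A \<Longrightarrow> 0 \<le> c j"
  shows "norm (\<Sum>j\<in>A. of_real (c j) * z j) \<le> (\<Sum>j\<in>A. c j * norm (z j))"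
proof -
  have "norm (\<Sum>j\<in>A. of_real (c j) * z j) \<le> (\<Sum>j\<in>A. norm (of_real (c j) * z j))"
    by (rule norm_sum)
  also have "\<dots> = (\<Sum>j\<in>A. c j * norm (z j))"
    using assms by (intro sum.cong) (auto simp: norm_mult)
  finally show ?thesis .
qed

lemma abs_sum_mult_le:
  fixes z :: "'b \<Rightarrow> real"
  assumes "\<And>j. j \<in> A \<Longrightarrow> 0 \<le> c j"
  shows "\<bar>\<Sum>j\<in>A. c j * z j\<bar> \<le> (\<Sum>j\<in>A. c j * \<bar>z j\<bar>)"
  using norm_sum_of_real_mult_le[of A c z] assms by simp

section \<open>Nonnegative matrices and the spectral radius\<close>

lemma nonneg_mat_mult:
  assumes "nonneg_mat A" "nonneg_mat B" "dim_col A = dim_row B"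
  shows "nonneg_mat (A * B)"
  using assms unfolding nonneg_mat_def
  by (auto simp: scalar_prod_def intro!: sum_nonneg mult_nonneg_nonneg)

lemma nonneg_mat_pow:
  assumes "A \<in> carrier_mat m m" "nonneg_mat A"
  shows "nonneg_mat (A ^\<^sub>m k)"
proof (induction k)
  case 0
  then show ?case by (simp add: nonneg_mat_def)
next
  case (Suc k)
  then show ?case using assms by (simp add: nonneg_mat_mult)
qed

lemma nonneg_mat_mult_vec_mono:
  fixes A :: "real mat"
  assumes A: "A \<in> carrier_mat m n" "nonneg_mat A" and u: "u \<in> carrier_vec n" and v: "v \<in> carrier_vec n"
    and le: "\<And>j. j < n \<Longrightarrow> u $ j \<le> v $ j" and i: "i < m"
  shows "(A *\<^sub>v u) $ i \<le> (A *\<^sub>v v) $ i"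
  unfolding mult_mat_vec_index_sum[OF A(1) u i] mult_mat_vec_index_sum[OF A(1) v i]
  using A i le unfolding nonneg_mat_def by (intro sum_mono mult_left_mono) auto

lemma subinvariant_pow_growth:
  fixes N :: "real mat"
  assumes N: "N \<in> carrier_mat m m" "nonneg_mat N" and v: "v \<in> carrier_vec m" and "0 \<le> c"
    and sub: "\<And>i. i < m \<Longrightarrow> c * v $ i \<le> (N *\<^sub>v v) $ i"
  shows "i < m \<Longrightarrow> c ^ k * v $ i \<le> (N ^\<^sub>m k *\<^sub>v v) $ i"
proof (induction k arbitrary: i)
  case 0
  then show ?case using v N by simp
next
  case (Suc k)
  have Nk: "N ^\<^sub>m k \<in> carrier_mat m m" "nonneg_mat (N ^\<^sub>m k)"
    using N by (auto intro: nonneg_mat_pow)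
  have "c ^ Suc k * v $ i = c * (c ^ k * v $ i)" by simp
  also have "\<dots> \<le> c * (N ^\<^sub>m k *\<^sub>v v) $ i" using Suc \<open>0 \<le> c\<close> by (intro mult_left_mono) auto
  also have "\<dots> = (N ^\<^sub>m k *\<^sub>v (c \<cdot>\<^sub>v v)) $ i" using Nk v Suc by (simp add: mult_mat_vec carrier_matD[OF N(1)])
  also have "\<dots> \<le> (N ^\<^sub>m k *\<^sub>v (N *\<^sub>v v)) $ i"
    using Nk N v sub Suc by (intro nonneg_mat_mult_vec_mono) auto
  also have "\<dots> = (N ^\<^sub>m Suc k *\<^sub>v v) $ i" using assoc_mult_mat_vec[OF Nk(1) N(1) v] by simp
  finally show ?case .
qed

lemma eigenvector_of_spectral_radius:
  assumes "M \<in> carrier_mat n n" "n > 0"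
  obtains mu w where "spectral_radius M = norm mu" "eigenvector M w mu"
  using spectral_radius_mem_max(1)[OF assms] unfolding spectrum_def eigenvalue_def by auto

lemma spectral_radius_smult_le:
  assumes A: "A \<in> carrier_mat n n" and "n > 0" and "c \<noteq> 0"
  shows "spectral_radius (c \<cdot>\<^sub>m A) \<le> norm c * spectral_radius A"
proof -
  have cA: "c \<cdot>\<^sub>m A \<in> carrier_mat n n" using A by simp
  from spectral_radius_mem_max(1)[OF cA \<open>n > 0\<close>] obtain mu w
    where eq: "spectral_radius (c \<cdot>\<^sub>m A) = norm mu" and ev: "eigenvector (c \<cdot>\<^sub>m A) w mu"
    unfolding spectrum_def eigenvalue_def by auto
  then have w: "w \<in> carrier_vec n" "w \<noteq> 0\<^sub>v n" and cAw: "(c \<cdot>\<^sub>m A) *\<^sub>v w = mu \<cdot>\<^sub>v w"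
    unfolding eigenvector_def using cA by auto
  have "A *\<^sub>v w = (mu / c) \<cdot>\<^sub>v w"
  proof (rule eq_vecI)
    fix i assume "i < dim_vec ((mu / c) \<cdot>\<^sub>v w)"
    then have i: "i < n" using w by simp
    have "c * (A *\<^sub>v w) $ i = mu * w $ i"
      using arg_cong[OF cAw, of "\<lambda>u. u $ i"] A w i by simp
    then show "(A *\<^sub>v w) $ i = ((mu / c) \<cdot>\<^sub>v w) $ i"
      using \<open>c \<noteq> 0\<close> w i by (simp add: field_simps)
  qed (use A w in simp)
  then have "mu / c \<in> spectrum A"
    using A w unfolding spectrum_def eigenvalue_def eigenvector_def by auto
  then have "norm (mu / c) \<le> spectral_radius A"
    by (intro spectral_radius_mem_max(2)[OF A \<open>n > 0\<close>]) auto
  then show ?thesis using eq \<open>c \<noteq> 0\<close> by (simp add: norm_divide field_simps)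
qed

lemma rho_nonneg:
  assumes "M \<in> carrier_mat m m" "m > 0"
  shows "0 \<le> rho M"
proof -
  have "rho M \<in> norm ` spectrum (map_mat complex_of_real M)"
    unfolding rho_def using assms by (intro spectral_radius_mem_max(1)) auto
  then show ?thesis by auto
qed

lemma rho_smult_le:
  assumes M: "M \<in> carrier_mat m m" and "m > 0" "0 < c"
  shows "rho (c \<cdot>\<^sub>m M) \<le> c * rho M"
proof -
  have "map_mat complex_of_real (c \<cdot>\<^sub>m M) = complex_of_real c \<cdot>\<^sub>m map_mat complex_of_real M"
    by (rule eq_matI) auto
  then show ?thesis
    using spectral_radius_smult_le[of "map_mat complex_of_real M" m "complex_of_real c"] assms
    unfolding rho_def by simp
qed

lemma pow_entries_bounded_if_rho_lt_1:
  assumes M: "M \<in> carrier_mat m m" and "rho M < 1"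
  obtains B where "\<And>k i j. i < m \<Longrightarrow> j < m \<Longrightarrow> (M ^\<^sub>m k) $$ (i,j) \<le> B"
proof -
  let ?Mc = "map_mat complex_of_real M"
  obtain B where B: "\<And>k. norm_bound (?Mc ^\<^sub>m k) B"
    using spectral_radius_jnf_norm_bound_less_1_upper_triangular[of ?Mc m] assms
    unfolding rho_def by force
  have "(M ^\<^sub>m k) $$ (i,j) \<le> B" if "i < m" "j < m" for k i j
  proof -
    have "?Mc ^\<^sub>m k = map_mat complex_of_real (M ^\<^sub>m k)"
      by (rule of_real_hom.mat_hom_pow[symmetric, OF M])
    moreover have "norm ((?Mc ^\<^sub>m k) $$ (i,j)) \<le> B"
      using B[of k] M that unfolding norm_bound_def by simp
    ultimately show ?thesis using that by (simp add: carrier_matD[OF M] abs_le_iff)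
  qed
  then show thesis by (rule that)
qed

text \<open>If \<open>\<rho>(M) < 1\<close>, the powers of \<open>c M\<close> stay bounded for some \<open>c > 1\<close>, while a
  nonnegative subinvariant vector makes them grow like \<open>c ^ k\<close>.\<close>
lemma rho_ge_1_if_subinvariant:
  fixes M :: "real mat"
  assumes M: "M \<in> carrier_mat m m" "nonneg_mat M"
    and v: "v \<in> carrier_vec m" "\<And>i. i < m \<Longrightarrow> 0 \<le> v $ i"
    and i0: "i0 < m" "0 < v $ i0"
    and sub: "\<And>i. i < m \<Longrightarrow> v $ i \<le> (M *\<^sub>v v) $ i"
  shows "1 \<le> rho M"
proof (rule ccontr)
  assume "\<not> 1 \<le> rho M"
  have "m > 0" using i0 by simp
  define c where "c = 2 / (1 + rho M)"
  have c: "1 < c" "c * rho M < 1"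
    using \<open>\<not> 1 \<le> rho M\<close> rho_nonneg[OF M(1) \<open>m > 0\<close>] unfolding c_def by (simp_all add: field_simps)
  define N where "N = c \<cdot>\<^sub>m M"
  have N: "N \<in> carrier_mat m m" "nonneg_mat N"
    using M c unfolding N_def nonneg_mat_def by auto
  have "rho N < 1"
    using rho_smult_le[OF M(1) \<open>m > 0\<close>, of c] c unfolding N_def by simp
  then obtain B where B: "\<And>k j. j < m \<Longrightarrow> (N ^\<^sub>m k) $$ (i0,j) \<le> B"
    using pow_entries_bounded_if_rho_lt_1[OF N(1)] i0 by metis
  have sub_N: "c * v $ i \<le> (N *\<^sub>v v) $ i" if "i < m" for i
  proof -
    have "(N *\<^sub>v v) $ i = c * (M *\<^sub>v v) $ i"
      unfolding N_def using M(1) v(1) that by (simp add: carrier_matD[OF M(1)])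
    then show ?thesis using sub[OF that] c by simp
  qed
  have "c ^ k * v $ i0 \<le> B * (\<Sum>j<m. v $ j)" for k
  proof -
    have "c ^ k * v $ i0 \<le> (N ^\<^sub>m k *\<^sub>v v) $ i0"
      using c i0 sub_N by (intro subinvariant_pow_growth[OF N v(1)]) auto
    also have "\<dots> \<le> (\<Sum>j<m. B * v $ j)"
      unfolding mult_mat_vec_index_sum[OF pow_carrier_mat[OF N(1)] v(1) i0(1)]
      using B v by (intro sum_mono mult_right_mono) auto
    finally show ?thesis unfolding sum_distrib_left .
  qed
  moreover obtain k where "B * (\<Sum>j<m. v $ j) / v $ i0 < c ^ k" using real_arch_pow[OF c(1)] by blast
  ultimately show False using i0 by (smt (verit) pos_divide_less_eq)
qed

section \<open>Substochastic comparison sequences\<close>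

lemma pow_tendsto_zero_imp_lt_1:
  fixes \<rho> w :: real
  assumes "(\<lambda>t. \<rho> ^ t * w) \<longlonglongrightarrow> 0" and "0 < w" and "0 \<le> \<rho>"
  shows "\<rho> < 1"
proof (rule ccontr)
  assume "\<not> \<rho> < 1"
  then have "w \<le> \<rho> ^ t * w" for t using assms(2) by (simp add: one_le_power)
  then have "w \<le> 0" by (intro LIMSEQ_le_const[OF assms(1)]) blast
  with assms(2) show False by simp
qed

text \<open>\<open>power_ones n a k\<close> is the vector \<open>a\<^sup>k 1\<close> of row sums of the \<open>k\<close>-th power of the
  \<open>n \<times> n\<close> matrix with entries \<open>a i j\<close>.\<close>
fun power_ones :: "nat \<Rightarrow> (nat \<Rightarrow> nat \<Rightarrow> real) \<Rightarrow> nat \<Rightarrow> nat \<Rightarrow> real" where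
  "power_ones n a 0 i = 1"
| "power_ones n a (Suc k) i = (\<Sum>j<n. a i j * power_ones n a k j)"

locale substochastic =
  fixes n :: nat and a :: "nat \<Rightarrow> nat \<Rightarrow> real"
  assumes nonneg: "\<And>i j. i < n \<Longrightarrow> j < n \<Longrightarrow> 0 \<le> a i j"
    and row_sum_le_1: "\<And>i. i < n \<Longrightarrow> (\<Sum>j<n. a i j) \<le> 1"
begin

abbreviation leaking :: bool where
  "leaking \<equiv> \<forall>i<n. \<exists>d. power_ones n a d i < 1"

lemma power_ones_nonneg: "i < n \<Longrightarrow> 0 \<le> power_ones n a k i"
  by (induction k arbitrary: i) (auto intro!: sum_nonneg mult_nonneg_nonneg nonneg)

lemma power_ones_Suc_le: "i < n \<Longrightarrow> power_ones n a (Suc k) i \<le> power_ones n a k i"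
proof (induction k arbitrary: i)
  case 0
  then show ?case using row_sum_le_1 by simp
next
  case (Suc k)
  have "power_ones n a (Suc (Suc k)) i = (\<Sum>j<n. a i j * power_ones n a (Suc k) j)" by simp
  also have "\<dots> \<le> (\<Sum>j<n. a i j * power_ones n a k j)"
    using Suc by (intro sum_mono mult_left_mono nonneg) auto
  finally show ?case by simp
qed

lemma power_ones_antimono: "k \<le> m \<Longrightarrow> i < n \<Longrightarrow> power_ones n a m i \<le> power_ones n a k i"
  by (induction m rule: dec_induct) (use power_ones_Suc_le order_trans in blast)+

lemma power_ones_le_1: "i < n \<Longrightarrow> power_ones n a k i \<le> 1"
  using power_ones_antimono[of 0 k i] by simp

lemma power_ones_add_le:
  assumes "\<And>i. i < n \<Longrightarrow> power_ones n a d i \<le> c"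
  shows "i < n \<Longrightarrow> power_ones n a (d + k) i \<le> c * power_ones n a k i"
proof (induction k arbitrary: i)
  case 0
  then show ?case using assms by simp
next
  case (Suc k)
  have "power_ones n a (d + Suc k) i = (\<Sum>j<n. a i j * power_ones n a (d + k) j)" by simp
  also have "\<dots> \<le> (\<Sum>j<n. a i j * (c * power_ones n a k j))"
    using Suc by (intro sum_mono mult_left_mono nonneg) auto
  also have "\<dots> = c * power_ones n a (Suc k) i" by (simp add: sum_distrib_left algebra_simps)
  finally show ?case .
qed

lemma power_ones_mult_le:
  assumes "\<And>i. i < n \<Longrightarrow> power_ones n a d i \<le> c" and "0 \<le> c"
  shows "i < n \<Longrightarrow> power_ones n a (m * d) i \<le> c ^ m"
proof (induction m arbitrary: i)
  case 0
  then show ?case by simp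
next
  case (Suc m)
  have "power_ones n a (d + m * d) i \<le> c * power_ones n a (m * d) i"
    by (rule power_ones_add_le[OF assms(1) Suc.prems])
  also have "\<dots> \<le> c * c ^ m" by (intro mult_left_mono Suc assms(2))
  finally show ?case by (simp add: add.commute)
qed

text \<open>If from every node some mass eventually leaks, a uniform number of steps loses a uniform
  fraction of it, so the decay is geometric.\<close>
lemma power_ones_tendsto_zero:
  assumes leak: leaking and i: "i < n"
  shows "(\<lambda>k. power_ones n a k i) \<longlonglongrightarrow> 0"
proof -
  from leak obtain d where d: "\<And>i. i < n \<Longrightarrow> power_ones n a (d i) i < 1" by metis
  define D where "D = Suc (\<Sum>i<n. d i)"
  have "d j \<le> D" if "j < n" for j
    using member_le_sum[of j "{..<n}" d] that unfolding D_def by simp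
  then have D_lt_1: "power_ones n a D j < 1" if "j < n" for j
    using power_ones_antimono d that by (meson order.strict_trans1)
  define c where "c = Max ((\<lambda>j. power_ones n a D j) ` {..<n})"
  have c_lt_1: "c < 1" unfolding c_def using i D_lt_1 by (subst Max_less_iff) auto
  have ge_c: "power_ones n a D j \<le> c" if "j < n" for j unfolding c_def using that by simp
  have c_nonneg: "0 \<le> c" using ge_c[OF i] power_ones_nonneg[OF i, of D] by linarith
  have bound: "power_ones n a k i \<le> c ^ (k div D)" for k
    using power_ones_antimono[of "k div D * D" k i] power_ones_mult_le[OF ge_c c_nonneg i]
      i by (simp add: order_trans)
  have lim: "(\<lambda>k. c ^ (k div D)) \<longlonglongrightarrow> 0"
    using filterlim_compose[OF LIMSEQ_power_zero filterlim_at_top_div_const_nat, of c D]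
      c_nonneg c_lt_1 by (simp add: o_def D_def)
  show ?thesis
    by (rule tendsto_sandwich[OF _ _ tendsto_const lim]) (simp_all add: power_ones_nonneg[OF i] bound)
qed

lemma two_step_subsolution_le:
  assumes split: "\<And>i j. i < n \<Longrightarrow> j < n \<Longrightarrow> a i j = a_cur i j + a_prev i j"
    and nonneg_cur: "\<And>i j. i < n \<Longrightarrow> j < n \<Longrightarrow> 0 \<le> a_cur i j"
    and nonneg_prev: "\<And>i j. i < n \<Longrightarrow> j < n \<Longrightarrow> 0 \<le> a_prev i j"
    and step: "\<And>t i. i < n \<Longrightarrow>
      p (Suc (Suc t)) i \<le> (\<Sum>j<n. a_cur i j * p (Suc t) j) + (\<Sum>j<n. a_prev i j * p t j)"
    and init: "\<And>i. i < n \<Longrightarrow> p 0 i \<le> C" "\<And>i. i < n \<Longrightarrow> p 1 i \<le> C"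
    and "0 \<le> C"
  shows "i < n \<Longrightarrow> p t i \<le> C * power_ones n a (t div 2) i"
proof -
  let ?u = "\<lambda>m j. C * power_ones n a m j"
  have next_step: "p (Suc (Suc t)) i \<le> ?u (Suc m) i"
    if "\<forall>j<n. p t j \<le> ?u m j \<and> p (Suc t) j \<le> ?u m j" and i: "i < n" for t m i
  proof -
    have "p (Suc (Suc t)) i \<le> (\<Sum>j<n. a_cur i j * p (Suc t) j) + (\<Sum>j<n. a_prev i j * p t j)"
      by (rule step[OF i])
    also have "\<dots> \<le> (\<Sum>j<n. a_cur i j * ?u m j) + (\<Sum>j<n. a_prev i j * ?u m j)"
      using that i by (intro add_mono sum_mono mult_left_mono nonneg_cur nonneg_prev) auto
    also have "\<dots> = ?u (Suc m) i"
      unfolding power_ones.simps sum_distrib_left sum.distrib[symmetric]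
      by (rule sum.cong) (simp_all add: split i algebra_simps)
    finally show ?thesis .
  qed
  have shrink: "?u (Suc m) j \<le> ?u m j" if "j < n" for m j
    using power_ones_Suc_le[OF that] \<open>0 \<le> C\<close> by (rule mult_left_mono)
  have pairs: "\<forall>j<n. \<forall>s\<in>{2 * m, Suc (2 * m)}. p s j \<le> ?u m j" for m
  proof (induction m)
    case 0
    then show ?case using init by simp
  next
    case (Suc m)
    have even: "p (Suc (Suc (2 * m))) j \<le> ?u (Suc m) j" if "j < n" for j
      by (rule next_step[OF _ that]) (use Suc in simp)
    have odd: "p (Suc (Suc (Suc (2 * m)))) j \<le> ?u (Suc m) j" if "j < n" for j
    proof (rule next_step[OF _ that], intro allI impI conjI)
      fix k assume "k < n"
      show "p (Suc (2 * m)) k \<le> ?u m k" using Suc \<open>k < n\<close> by blast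
      show "p (Suc (Suc (2 * m))) k \<le> ?u m k" using even[OF \<open>k < n\<close>] shrink[OF \<open>k < n\<close>, of m] by linarith
    qed
    show ?case using even odd by simp
  qed
  have "t \<in> {2 * (t div 2), Suc (2 * (t div 2))}" by (simp, presburger)
  then show "i < n \<Longrightarrow> p t i \<le> ?u (t div 2) i" using pairs by blast
qed

lemma two_step_subsolution_tendsto_zero:
  assumes leak: leaking
    and split: "\<And>i j. i < n \<Longrightarrow> j < n \<Longrightarrow> a i j = a_cur i j + a_prev i j"
    and nonneg_cur: "\<And>i j. i < n \<Longrightarrow> j < n \<Longrightarrow> 0 \<le> a_cur i j"
    and nonneg_prev: "\<And>i j. i < n \<Longrightarrow> j < n \<Longrightarrow> 0 \<le> a_prev i j"
    and p_nonneg: "\<And>t i. i < n \<Longrightarrow> 0 \<le> p t i"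
    and step: "\<And>t i. i < n \<Longrightarrow>
      p (Suc (Suc t)) i \<le> (\<Sum>j<n. a_cur i j * p (Suc t) j) + (\<Sum>j<n. a_prev i j * p t j)"
    and i: "i < n"
  shows "(\<lambda>t. p t i) \<longlonglongrightarrow> 0"
proof -
  define C where "C = (\<Sum>j<n. p 0 j + p 1 j)"
  have "p 0 j + p 1 j \<le> C" if "j < n" for j
    unfolding C_def by (rule member_le_sum) (use that in \<open>auto intro: add_nonneg_nonneg p_nonneg\<close>)
  then have "p 0 j \<le> C" "p 1 j \<le> C" if "j < n" for j
    using that p_nonneg[of j] by (smt (verit))+
  moreover have "0 \<le> C" unfolding C_def by (auto intro!: sum_nonneg add_nonneg_nonneg p_nonneg)
  ultimately have bound: "p t i \<le> C * power_ones n a (t div 2) i" for t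
    using two_step_subsolution_le[where p = p, OF split nonneg_cur nonneg_prev step] i by blast
  have "(\<lambda>t. power_ones n a (t div 2) i) \<longlonglongrightarrow> 0"
    using filterlim_compose[OF power_ones_tendsto_zero[OF leak i] filterlim_at_top_div_const_nat]
    by (simp add: o_def)
  then have lim: "(\<lambda>t. C * power_ones n a (t div 2) i) \<longlonglongrightarrow> 0"
    by (rule tendsto_mult_right_zero)
  show ?thesis
    by (rule tendsto_sandwich[OF _ _ tendsto_const lim]) (simp_all add: p_nonneg[OF i] bound)
qed

lemma two_step_affine_tendsto:
  assumes leak: leaking
    and split: "\<And>i j. i < n \<Longrightarrow> j < n \<Longrightarrow> a i j = a_cur i j + a_prev i j"
    and nonneg_cur: "\<And>i j. i < n \<Longrightarrow> j < n \<Longrightarrow> 0 \<le> a_cur i j"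
    and nonneg_prev: "\<And>i j. i < n \<Longrightarrow> j < n \<Longrightarrow> 0 \<le> a_prev i j"
    and rec: "\<And>t i. i < n \<Longrightarrow>
      x (Suc (Suc t)) i = (\<Sum>j<n. a_cur i j * x (Suc t) j) + (\<Sum>j<n. a_prev i j * x t j) + r i"
    and fixed: "\<And>i. i < n \<Longrightarrow> y i = (\<Sum>j<n. a i j * y j) + r i"
    and i: "i < n"
  shows "(\<lambda>t. x t i) \<longlonglongrightarrow> y i"
proof -
  let ?e = "\<lambda>t j. \<bar>x t j - y j\<bar>"
  have "?e (Suc (Suc t)) i \<le> (\<Sum>j<n. a_cur i j * ?e (Suc t) j) + (\<Sum>j<n. a_prev i j * ?e t j)"
    if i: "i < n" for t i
  proof -
    have "(\<Sum>j<n. a i j * y j) = (\<Sum>j<n. a_cur i j * y j) + (\<Sum>j<n. a_prev i j * y j)"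
      unfolding sum.distrib[symmetric] by (rule sum.cong) (simp_all add: split i distrib_right)
    then have "x (Suc (Suc t)) i - y i
        = ((\<Sum>j<n. a_cur i j * x (Suc t) j) - (\<Sum>j<n. a_cur i j * y j))
          + ((\<Sum>j<n. a_prev i j * x t j) - (\<Sum>j<n. a_prev i j * y j))"
      using rec[OF i, of t] fixed[OF i] by linarith
    also have "\<dots> = (\<Sum>j<n. a_cur i j * (x (Suc t) j - y j)) + (\<Sum>j<n. a_prev i j * (x t j - y j))"
      by (simp only: sum_subtractf[symmetric] right_diff_distrib)
    finally have "?e (Suc (Suc t)) i
        \<le> \<bar>\<Sum>j<n. a_cur i j * (x (Suc t) j - y j)\<bar> + \<bar>\<Sum>j<n. a_prev i j * (x t j - y j)\<bar>"
      by (simp add: abs_triangle_ineq)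
    also have "\<dots> \<le> (\<Sum>j<n. a_cur i j * ?e (Suc t) j) + (\<Sum>j<n. a_prev i j * ?e t j)"
      using i by (intro add_mono abs_sum_mult_le) (auto intro: nonneg_cur nonneg_prev)
    finally show ?thesis .
  qed
  then have "(\<lambda>t. ?e t i) \<longlonglongrightarrow> 0"
    by (intro two_step_subsolution_tendsto_zero[OF leak split nonneg_cur nonneg_prev _ _ i]) auto
  then show ?thesis
    by (rule LIM_zero_cancel[OF tendsto_rabs_zero_cancel])
qed

lemma affine_tendsto:
  assumes leak: leaking
    and rec: "\<And>t i. i < n \<Longrightarrow> x (Suc t) i = (\<Sum>j<n. a i j * x t j) + r i"
    and fixed: "\<And>i. i < n \<Longrightarrow> y i = (\<Sum>j<n. a i j * y j) + r i"
    and i: "i < n"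
  shows "(\<lambda>t. x t i) \<longlonglongrightarrow> y i"
  by (rule two_step_affine_tendsto[where a_cur = a and a_prev = "\<lambda>_ _. 0", OF leak _ nonneg _ _ fixed i])
    (simp_all add: rec)

lemma affine_fixed_point_unique:
  assumes leak: leaking
    and y: "\<And>i. i < n \<Longrightarrow> y i = (\<Sum>j<n. a i j * y j) + r i"
    and z: "\<And>i. i < n \<Longrightarrow> z i = (\<Sum>j<n. a i j * z j) + r i"
    and i: "i < n"
  shows "z i = y i"
  using affine_tendsto[where x = "\<lambda>_. z", OF leak z y i] by (simp add: LIMSEQ_const_iff)

lemma two_step_eigen_norm_lt_1:
  fixes \<rho> :: real and w :: "nat \<Rightarrow> real"
  assumes leak: leaking
    and split: "\<And>i j. i < n \<Longrightarrow> j < n \<Longrightarrow> a i j = a_cur i j + a_prev i j"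
    and nonneg_cur: "\<And>i j. i < n \<Longrightarrow> j < n \<Longrightarrow> 0 \<le> a_cur i j"
    and nonneg_prev: "\<And>i j. i < n \<Longrightarrow> j < n \<Longrightarrow> 0 \<le> a_prev i j"
    and "0 \<le> \<rho>" and w_nonneg: "\<And>i. i < n \<Longrightarrow> 0 \<le> w i"
    and eigen: "\<And>i. i < n \<Longrightarrow>
      \<rho>\<^sup>2 * w i \<le> \<rho> * (\<Sum>j<n. a_cur i j * w j) + (\<Sum>j<n. a_prev i j * w j)"
    and i: "i < n" "0 < w i"
  shows "\<rho> < 1"
proof -
  let ?p = "\<lambda>t j. \<rho> ^ t * w j"
  have "?p (Suc (Suc t)) j \<le> (\<Sum>k<n. a_cur j k * ?p (Suc t) k) + (\<Sum>k<n. a_prev j k * ?p t k)"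
    if "j < n" for t j
  proof -
    have "?p (Suc (Suc t)) j = \<rho> ^ t * (\<rho>\<^sup>2 * w j)" by (simp add: power2_eq_square)
    also have "\<dots> \<le> \<rho> ^ t * (\<rho> * (\<Sum>k<n. a_cur j k * w k) + (\<Sum>k<n. a_prev j k * w k))"
      using eigen[OF that] \<open>0 \<le> \<rho>\<close> by (intro mult_left_mono) auto
    also have "\<dots> = (\<Sum>k<n. a_cur j k * ?p (Suc t) k) + (\<Sum>k<n. a_prev j k * ?p t k)"
      by (simp add: sum_distrib_left algebra_simps)
    finally show ?thesis .
  qed
  then have "(\<lambda>t. ?p t i) \<longlonglongrightarrow> 0"
    using \<open>0 \<le> \<rho>\<close> w_nonneg
    by (intro two_step_subsolution_tendsto_zero[OF leak split nonneg_cur nonneg_prev _ _ i(1)]) auto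
  then show ?thesis using pow_tendsto_zero_imp_lt_1 i(2) \<open>0 \<le> \<rho>\<close> by blast
qed

lemma eigen_norm_lt_1:
  fixes \<rho> :: real and w :: "nat \<Rightarrow> real"
  assumes leak: leaking
    and "0 \<le> \<rho>" and w_nonneg: "\<And>i. i < n \<Longrightarrow> 0 \<le> w i"
    and eigen: "\<And>i. i < n \<Longrightarrow> \<rho> * w i \<le> (\<Sum>j<n. a i j * w j)"
    and i: "i < n" "0 < w i"
  shows "\<rho> < 1"
proof (rule two_step_eigen_norm_lt_1[where a_cur = a and a_prev = "\<lambda>_ _. 0" and w = w, OF leak _ nonneg _
      \<open>0 \<le> \<rho>\<close> w_nonneg _ i])
  fix i assume "i < n"
  then show "\<rho>\<^sup>2 * w i \<le> \<rho> * (\<Sum>j<n. a i j * w j) + (\<Sum>j<n. 0 * w j)"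
    using mult_left_mono[OF eigen \<open>0 \<le> \<rho>\<close>] by (simp add: power2_eq_square mult.assoc)
qed simp_all

end

section \<open>The FJ-MM model\<close>

locale fj_mm =
  fixes n :: nat and L W1 W2 :: "real mat"
  assumes n_pos: "n > 0"
    and L: "L \<in> carrier_mat n n" and W1: "W1 \<in> carrier_mat n n" and W2: "W2 \<in> carrier_mat n n"
    and L_diag: "diagonal_mat L"
    and L_range: "\<forall>i<n. 0 \<le> L $$ (i,i) \<and> L $$ (i,i) \<le> 1"
    and W1_nonneg: "nonneg_mat W1" and W2_nonneg: "nonneg_mat W2"
    and W_stoch: "row_stochastic n (W1 + W2)"
begin

abbreviation "A \<equiv> Abar L W1 W2"
abbreviation "Ad \<equiv> Abar_d n L W1 W2"
text \<open>\<open>stubborn\<close> is the node set \<open>V\<close> of the statement; as \<open>L\<close> is diagonal, \<open>lw1\<close>, \<open>lw2\<close> and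
  \<open>lw\<close> are the entries of \<open>L W1\<close>, \<open>L W2\<close> and \<open>A = L (W1 + W2)\<close>.\<close>
abbreviation "stubborn \<equiv> {i. i < n \<and> L $$ (i,i) < 1}"
abbreviation "stubborn_reachable \<equiv> stubborn \<noteq> {} \<and> globally_reachable n (W1 + W2) stubborn"

abbreviation lw1 :: "nat \<Rightarrow> nat \<Rightarrow> real" where "lw1 \<equiv> \<lambda>i j. L $$ (i,i) * W1 $$ (i,j)"
abbreviation lw2 :: "nat \<Rightarrow> nat \<Rightarrow> real" where "lw2 \<equiv> \<lambda>i j. L $$ (i,i) * W2 $$ (i,j)"
abbreviation lw :: "nat \<Rightarrow> nat \<Rightarrow> real" where "lw \<equiv> \<lambda>i j. L $$ (i,i) * (W1 $$ (i,j) + W2 $$ (i,j))"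

lemma lw1_nonneg: "i < n \<Longrightarrow> j < n \<Longrightarrow> 0 \<le> lw1 i j"
  using L_range W1_nonneg W1 unfolding nonneg_mat_def by simp

lemma lw2_nonneg: "i < n \<Longrightarrow> j < n \<Longrightarrow> 0 \<le> lw2 i j"
  using L_range W2_nonneg W2 unfolding nonneg_mat_def by simp

lemma lw_split: "lw i j = lw1 i j + lw2 i j"
  by (simp add: distrib_left)

lemma W_row_sum: "i < n \<Longrightarrow> (\<Sum>j<n. W1 $$ (i,j) + W2 $$ (i,j)) = 1"
  using W_stoch W1 W2 unfolding row_stochastic_def by simp

lemma lw_row_sum: "i < n \<Longrightarrow> (\<Sum>j<n. lw i j) = L $$ (i,i)"
  by (simp only: sum_distrib_left[symmetric] W_row_sum mult_1_right)

sublocale substochastic n lw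
proof
  fix i j assume "i < n" "j < n"
  then show "0 \<le> lw i j" unfolding lw_split by (intro add_nonneg_nonneg lw1_nonneg lw2_nonneg)
next
  fix i assume "i < n"
  then show "(\<Sum>j<n. lw i j) \<le> 1" unfolding lw_row_sum[OF \<open>i < n\<close>] using L_range by simp
qed

lemma LW1_index: "i < n \<Longrightarrow> j < n \<Longrightarrow> (L * W1) $$ (i,j) = lw1 i j"
  by (rule diagonal_mat_mult_index[OF L L_diag W1])

lemma LW2_index: "i < n \<Longrightarrow> j < n \<Longrightarrow> (L * W2) $$ (i,j) = lw2 i j"
  by (rule diagonal_mat_mult_index[OF L L_diag W2])

lemma A_carrier: "A \<in> carrier_mat n n"
  unfolding Abar_def using L W1 W2 by simp

lemma A_index: "i < n \<Longrightarrow> j < n \<Longrightarrow> A $$ (i,j) = lw i j"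
  unfolding Abar_def using diagonal_mat_mult_index[OF L L_diag, of "W1 + W2"] W1 W2 by simp

lemma A_mult_vec:
  assumes "y \<in> carrier_vec n"
  shows "A *\<^sub>v y = vec n (\<lambda>i. \<Sum>j<n. lw i j * y $ j)"
proof (rule eq_vecI)
  fix i assume "i < dim_vec (vec n (\<lambda>i. \<Sum>j<n. lw i j * y $ j))"
  then have i: "i < n" by simp
  show "(A *\<^sub>v y) $ i = vec n (\<lambda>i. \<Sum>j<n. lw i j * y $ j) $ i"
    unfolding mult_mat_vec_index_sum[OF A_carrier assms i] index_vec[OF i]
    by (rule sum.cong) (simp_all add: A_index i)
qed (use A_carrier in simp)

lemma A_affine_iff:
  assumes "y \<in> carrier_vec n" "r \<in> carrier_vec n"
  shows "y = A *\<^sub>v y + r \<longleftrightarrow> (\<forall>i<n. y $ i = (\<Sum>j<n. lw i j * y $ j) + r $ i)"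
  using assms by (auto simp: A_mult_vec vec_eq_iff)

lemma mm_eq_A_mult_vec:
  assumes "y \<in> carrier_vec n"
  shows "L *\<^sub>v (W1 *\<^sub>v y + W2 *\<^sub>v y) = A *\<^sub>v y"
  unfolding Abar_def using assms L W1 W2
  by (simp add: add_mult_distrib_mat_vec[symmetric, of W1 n n W2] assoc_mult_mat_vec[of L n n "W1 + W2" n y])

lemma mm_mult_vec:
  assumes "y \<in> carrier_vec n" "z \<in> carrier_vec n"
  shows "L *\<^sub>v (W1 *\<^sub>v y + W2 *\<^sub>v z) = vec n (\<lambda>i. (\<Sum>j<n. lw1 i j * y $ j) + (\<Sum>j<n. lw2 i j * z $ j))"
proof (rule eq_vecI)
  fix i assume "i < dim_vec (vec n (\<lambda>i. (\<Sum>j<n. lw1 i j * y $ j) + (\<Sum>j<n. lw2 i j * z $ j)))"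
  then have i: "i < n" by simp
  have "(L *\<^sub>v (W1 *\<^sub>v y + W2 *\<^sub>v z)) $ i = L $$ (i,i) * ((W1 *\<^sub>v y) $ i + (W2 *\<^sub>v z) $ i)"
    using assms W1 W2 i by (simp add: diagonal_mat_mult_vec_index[OF L L_diag])
  then show "(L *\<^sub>v (W1 *\<^sub>v y + W2 *\<^sub>v z)) $ i
      = vec n (\<lambda>i. (\<Sum>j<n. lw1 i j * y $ j) + (\<Sum>j<n. lw2 i j * z $ j)) $ i"
    unfolding mult_mat_vec_index_sum[OF W1 assms(1) i] mult_mat_vec_index_sum[OF W2 assms(2) i] index_vec[OF i]
    by (simp add: sum_distrib_left mult.assoc distrib_left)
qed (use L in simp)

lemma L_nonneg: "nonneg_mat L"
  using L L_diag L_range unfolding nonneg_mat_def diagonal_mat_def by (metis carrier_matD order_refl)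

lemma A_nonneg: "nonneg_mat A"
  unfolding Abar_def using L W1 W2 W1_nonneg W2_nonneg
  by (intro nonneg_mat_mult L_nonneg) (auto simp: nonneg_mat_def)

lemma Ad_carrier: "Ad \<in> carrier_mat (n + n) (n + n)"
  unfolding Abar_d_def using L W1 W2 by (intro four_block_carrier_mat) auto

lemma Ad_nonneg: "nonneg_mat Ad"
  using nonneg_mat_mult[OF L_nonneg W1_nonneg] nonneg_mat_mult[OF L_nonneg W2_nonneg] L W1 W2
  unfolding nonneg_mat_def Abar_d_def by auto

lemma Ad_mult_vec: "a \<in> carrier_vec n \<Longrightarrow> b \<in> carrier_vec n \<Longrightarrow>
    Ad *\<^sub>v (a @\<^sub>v b) = b @\<^sub>v ((L * W2) *\<^sub>v a + (L * W1) *\<^sub>v b)"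
  unfolding Abar_d_def using L W1 W2 by (intro companion_block_mult_vec) auto

lemma Ad_of_real: "map_mat complex_of_real Ad
    = four_block_mat (0\<^sub>m n n) (1\<^sub>m n) (map_mat of_real (L * W2)) (map_mat of_real (L * W1))"
  unfolding Abar_d_def using L W1 W2
  by (subst map_four_block_mat[of _ n n _ n _ n]) (auto intro!: eq_matI)

text \<open>If \<open>i\<close> reaches a stubborn node \<open>j\<close>, some positive weight of row \<open>i\<close> of \<open>A ^ d\<close> passes
  through the factor \<open>L $$ (j,j) < 1\<close>, so the row sum drops below 1.\<close>
lemma reachable_stubborn_leak:
  assumes "(i,j) \<in> (graph_edges n (W1 + W2))\<^sup>*" and "j \<in> stubborn"
  shows "i < n \<longrightarrow> (\<exists>d. power_ones n lw d i < 1)"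
  using assms(1)
proof (induction rule: converse_rtrancl_induct)
  case base
  from assms(2) have j: "j < n" and "L $$ (j,j) < 1" by auto
  moreover have "power_ones n lw 1 j = L $$ (j,j)" using lw_row_sum[OF j] by simp
  ultimately show ?case by (intro impI exI[of _ 1]) simp
next
  case (step i k)
  then have i: "i < n" and k: "k < n" and wik: "0 < W1 $$ (i,k) + W2 $$ (i,k)"
    using W1 W2 unfolding graph_edges_def by auto
  from step.IH k obtain d where d: "power_ones n lw d k < 1" by blast
  let ?w = "\<lambda>l. W1 $$ (i,l) + W2 $$ (i,l)"
  let ?s = "\<Sum>l<n. ?w l * power_ones n lw d l"
  have w_nonneg: "0 \<le> ?w l" if "l < n" for l
    using W1_nonneg W2_nonneg W1 W2 i that unfolding nonneg_mat_def by (simp add: add_nonneg_nonneg)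
  have "?s < (\<Sum>l<n. ?w l)"
  proof (rule sum_strict_mono_ex1)
    show "\<forall>l\<in>{..<n}. ?w l * power_ones n lw d l \<le> ?w l"
      using w_nonneg power_ones_le_1 by (simp add: mult_left_le)
    show "\<exists>l\<in>{..<n}. ?w l * power_ones n lw d l < ?w l"
      using k wik d by (intro bexI[of _ k]) simp_all
  qed simp
  then have "?s < 1" by (simp only: W_row_sum[OF i])
  have "power_ones n lw (Suc d) i = L $$ (i,i) * ?s"
    by (simp add: sum_distrib_left mult.assoc)
  also have "\<dots> \<le> ?s"
    using L_range i w_nonneg power_ones_nonneg
    by (intro mult_left_le_one_le sum_nonneg mult_nonneg_nonneg) auto
  finally show ?case using \<open>?s < 1\<close> by (intro impI exI[of _ "Suc d"]) simp
qed

lemma leak_if_stubborn_reachable: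
  assumes stubborn_reachable
  shows leaking
  using assms reachable_stubborn_leak unfolding globally_reachable_def by blast

text \<open>The nodes reachable from a node that reaches no stubborn node form a closed class on
  which \<open>A\<close> is row stochastic; its indicator vector is subinvariant.\<close>
lemma subinvariant_if_not_stubborn_reachable:
  assumes "\<not> stubborn_reachable"
  obtains v i0 where "v \<in> carrier_vec n" "\<And>i. i < n \<Longrightarrow> 0 \<le> v $ i" "i0 < n" "0 < v $ i0"
    "\<And>i. i < n \<Longrightarrow> v $ i \<le> (\<Sum>j<n. lw i j * v $ j)"
proof -
  let ?E = "graph_edges n (W1 + W2)"
  obtain i0 where i0: "i0 < n" and unreach: "\<forall>j\<in>stubborn. (i0,j) \<notin> ?E\<^sup>*"
    using assms n_pos unfolding globally_reachable_def by auto
  define v where "v = vec n (\<lambda>k. if (i0,k) \<in> ?E\<^sup>* then 1 else (0::real))"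
  have sub: "v $ i \<le> (\<Sum>j<n. lw i j * v $ j)" if i: "i < n" for i
  proof (cases "(i0,i) \<in> ?E\<^sup>*")
    case True
    then have "L $$ (i,i) = 1" using unreach L_range i by force
    have "(\<Sum>j<n. lw i j * v $ j) = (\<Sum>j<n. W1 $$ (i,j) + W2 $$ (i,j))"
    proof (rule sum.cong)
      fix j assume "j \<in> {..<n}"
      then have j: "j < n" by simp
      show "lw i j * v $ j = W1 $$ (i,j) + W2 $$ (i,j)"
      proof (cases "0 < W1 $$ (i,j) + W2 $$ (i,j)")
        case True
        then have "(i,j) \<in> ?E" unfolding graph_edges_def using i j W1 W2 by simp
        with \<open>(i0,i) \<in> ?E\<^sup>*\<close> have "(i0,j) \<in> ?E\<^sup>*" by simp
        then show ?thesis unfolding v_def using j \<open>L $$ (i,i) = 1\<close> by simp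
      next
        case False
        then have "W1 $$ (i,j) + W2 $$ (i,j) = 0"
          using W1_nonneg W2_nonneg W1 W2 i j unfolding nonneg_mat_def by force
        then show ?thesis by simp
      qed
    qed simp
    then show ?thesis unfolding v_def using W_row_sum i True by simp
  next
    case False
    then have "v $ i = 0" unfolding v_def using i by simp
    moreover have "0 \<le> (\<Sum>j<n. lw i j * v $ j)"
      unfolding v_def using i by (intro sum_nonneg mult_nonneg_nonneg nonneg) auto
    ultimately show ?thesis by simp
  qed
  show thesis by (rule that[of v i0]) (use i0 sub in \<open>auto simp: v_def\<close>)
qed

lemma rho_A_ge_1:
  assumes "\<not> stubborn_reachable"
  shows "1 \<le> rho A"
proof -
  obtain v i0 where v: "v \<in> carrier_vec n" "\<And>i. i < n \<Longrightarrow> 0 \<le> v $ i" and i0: "i0 < n" "0 < v $ i0"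
    and sub: "\<And>i. i < n \<Longrightarrow> v $ i \<le> (\<Sum>j<n. lw i j * v $ j)"
    using subinvariant_if_not_stubborn_reachable[OF assms] by blast
  show ?thesis
  proof (rule rho_ge_1_if_subinvariant[OF A_carrier A_nonneg v i0])
    fix i assume "i < n"
    then show "v $ i \<le> (A *\<^sub>v v) $ i" unfolding A_mult_vec[OF v(1)] using sub by simp
  qed
qed

lemma rho_Ad_ge_1:
  assumes "\<not> stubborn_reachable"
  shows "1 \<le> rho Ad"
proof -
  obtain v i0 where v: "v \<in> carrier_vec n" "\<And>i. i < n \<Longrightarrow> 0 \<le> v $ i" and i0: "i0 < n" "0 < v $ i0"
    and sub: "\<And>i. i < n \<Longrightarrow> v $ i \<le> (\<Sum>j<n. lw i j * v $ j)"
    using subinvariant_if_not_stubborn_reachable[OF assms] by blast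
  have LW: "(L * W2) *\<^sub>v v + (L * W1) *\<^sub>v v = A *\<^sub>v v"
    unfolding mm_eq_A_mult_vec[OF v(1), symmetric] using L W1 W2 v
    by (simp add: mult_add_distrib_mat_vec[of L n n] comm_add_vec[of "L *\<^sub>v (W2 *\<^sub>v v)" n])
  have "v $ i \<le> (A *\<^sub>v v) $ i" if "i < n" for i unfolding A_mult_vec[OF v(1)] using sub that by simp
  then have "(v @\<^sub>v v) $ i \<le> (Ad *\<^sub>v (v @\<^sub>v v)) $ i" if "i < n + n" for i
    unfolding Ad_mult_vec[OF v(1) v(1)] LW using that v A_carrier by (cases "i < n") auto
  then show ?thesis
    using v i0 by (intro rho_ge_1_if_subinvariant[OF Ad_carrier Ad_nonneg, of "v @\<^sub>v v" i0]) auto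
qed

lemma rho_A_lt_1:
  assumes stubborn_reachable
  shows "rho A < 1"
proof -
  let ?Ac = "map_mat complex_of_real A"
  obtain mu w where sr: "spectral_radius ?Ac = norm mu" and ev: "eigenvector ?Ac w mu"
    using eigenvector_of_spectral_radius[of ?Ac n] A_carrier n_pos by auto
  then have w: "w \<in> carrier_vec n" "w \<noteq> 0\<^sub>v n" and Aw: "?Ac *\<^sub>v w = mu \<cdot>\<^sub>v w"
    unfolding eigenvector_def using A_carrier by auto
  obtain i where i: "i < n" "w $ i \<noteq> 0" using nonzero_vec_index[OF w] .
  have "norm mu * norm (w $ j) \<le> (\<Sum>k<n. lw j k * norm (w $ k))" if j: "j < n" for j
  proof -
    have "mu * w $ j = (\<Sum>k<n. of_real (lw j k) * w $ k)"
      using arg_cong[OF Aw, of "\<lambda>u. u $ j"] w j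
      by (simp add: of_real_mult_vec_index[OF A_carrier w(1) j A_index[OF j]])
    then have "norm (mu * w $ j) \<le> (\<Sum>k<n. lw j k * norm (w $ k))"
      by (simp only:) (rule norm_sum_of_real_mult_le, use j in \<open>simp add: nonneg\<close>)
    then show ?thesis by (simp add: norm_mult)
  qed
  then have "norm mu < 1"
    using eigen_norm_lt_1[OF leak_if_stubborn_reachable[OF assms], of "norm mu" "\<lambda>j. norm (w $ j)"] i
    by auto
  then show ?thesis unfolding rho_def sr .
qed

lemma Ad_eigenvector_first_block:
  assumes "eigenvector (map_mat complex_of_real Ad) w mu"
  obtains a where "a \<in> carrier_vec n" "a \<noteq> 0\<^sub>v n" "\<And>j. j < n \<Longrightarrow>
    mu\<^sup>2 * a $ j = mu * (\<Sum>k<n. of_real (lw1 j k) * a $ k) + (\<Sum>k<n. of_real (lw2 j k) * a $ k)"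
proof -
  let ?Adc = "map_mat complex_of_real Ad" and ?M1 = "map_mat complex_of_real (L * W1)"
    and ?M2 = "map_mat complex_of_real (L * W2)"
  have w: "w \<in> carrier_vec (n + n)" "w \<noteq> 0\<^sub>v (n + n)" and Aw: "?Adc *\<^sub>v w = mu \<cdot>\<^sub>v w"
    using assms Ad_carrier unfolding eigenvector_def by auto
  define a where "a = vec_first w n"
  define b where "b = vec_last w n"
  have ab: "a \<in> carrier_vec n" "b \<in> carrier_vec n" "w = a @\<^sub>v b"
    unfolding a_def b_def using w by auto
  have "b @\<^sub>v (?M2 *\<^sub>v a + ?M1 *\<^sub>v b) = ?Adc *\<^sub>v w"
    unfolding Ad_of_real ab(3) using L W1 W2 ab by (intro companion_block_mult_vec[symmetric]) auto
  also have "\<dots> = mu \<cdot>\<^sub>v w" by (rule Aw)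
  also have "\<dots> = (mu \<cdot>\<^sub>v a) @\<^sub>v (mu \<cdot>\<^sub>v b)" unfolding ab(3) using ab by (intro smult_append_vec)
  finally have "b = mu \<cdot>\<^sub>v a \<and> ?M2 *\<^sub>v a + ?M1 *\<^sub>v b = mu \<cdot>\<^sub>v b"
    by (rule iffD1[OF append_vec_eq[OF ab(2) smult_carrier_vec[THEN iffD2, OF ab(1)]]])
  then have b: "b = mu \<cdot>\<^sub>v a" and X: "?M2 *\<^sub>v a + ?M1 *\<^sub>v b = mu \<cdot>\<^sub>v b" by blast+
  have "a \<noteq> 0\<^sub>v n" using w ab b by auto
  moreover have "mu\<^sup>2 * a $ j
      = mu * (\<Sum>k<n. of_real (lw1 j k) * a $ k) + (\<Sum>k<n. of_real (lw2 j k) * a $ k)" if j: "j < n" for j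
  proof -
    have "mu\<^sup>2 * a $ j = (?M2 *\<^sub>v a + ?M1 *\<^sub>v b) $ j"
      using arg_cong[OF X, of "\<lambda>u. u $ j"] ab j b by (simp add: power2_eq_square)
    also have "\<dots> = (?M2 *\<^sub>v a) $ j + (?M1 *\<^sub>v b) $ j"
      by (rule index_add_vec) (use ab L W1 j in simp)
    also have "\<dots> = (\<Sum>k<n. of_real (lw2 j k) * a $ k) + (\<Sum>k<n. of_real (lw1 j k) * b $ k)"
      by (simp only: of_real_mult_vec_index[OF mult_carrier_mat[OF L W2] ab(1) j LW2_index[OF j]]
          of_real_mult_vec_index[OF mult_carrier_mat[OF L W1] ab(2) j LW1_index[OF j]])
    also have "(\<Sum>k<n. of_real (lw1 j k) * b $ k) = mu * (\<Sum>k<n. of_real (lw1 j k) * a $ k)"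
      unfolding sum_distrib_left using ab(1) b by (intro sum.cong) auto
    finally show ?thesis by simp
  qed
  ultimately show thesis using that ab(1) by blast
qed

lemma rho_Ad_lt_1:
  assumes stubborn_reachable
  shows "rho Ad < 1"
proof -
  obtain mu w where sr: "spectral_radius (map_mat complex_of_real Ad) = norm mu"
    and ev: "eigenvector (map_mat complex_of_real Ad) w mu"
    using eigenvector_of_spectral_radius[of "map_mat complex_of_real Ad" "n + n"] Ad_carrier n_pos
    by auto
  obtain a where a: "a \<in> carrier_vec n" "a \<noteq> 0\<^sub>v n" and eigen: "\<And>j. j < n \<Longrightarrow>
    mu\<^sup>2 * a $ j = mu * (\<Sum>k<n. of_real (lw1 j k) * a $ k) + (\<Sum>k<n. of_real (lw2 j k) * a $ k)"
    by (rule Ad_eigenvector_first_block[OF ev]) blast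
  obtain i where i: "i < n" "a $ i \<noteq> 0" using nonzero_vec_index[OF a] .
  have "(norm mu)\<^sup>2 * norm (a $ j)
      \<le> norm mu * (\<Sum>k<n. lw1 j k * norm (a $ k)) + (\<Sum>k<n. lw2 j k * norm (a $ k))"
    if j: "j < n" for j
  proof -
    have "(norm mu)\<^sup>2 * norm (a $ j)
        = norm (mu * (\<Sum>k<n. of_real (lw1 j k) * a $ k) + (\<Sum>k<n. of_real (lw2 j k) * a $ k))"
      using eigen[OF j] by (simp only: norm_mult[symmetric] norm_power[symmetric])
    also have "\<dots> \<le> norm mu * norm (\<Sum>k<n. of_real (lw1 j k) * a $ k)
        + norm (\<Sum>k<n. of_real (lw2 j k) * a $ k)"
      by (rule order.trans[OF norm_triangle_ineq]) (simp add: norm_mult)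
    also have "\<dots> \<le> norm mu * (\<Sum>k<n. lw1 j k * norm (a $ k)) + (\<Sum>k<n. lw2 j k * norm (a $ k))"
      using j lw1_nonneg lw2_nonneg
      by (intro add_mono mult_left_mono norm_sum_of_real_mult_le) auto
    finally show ?thesis .
  qed
  then have "norm mu < 1"
    using i lw1_nonneg lw2_nonneg
    by (intro two_step_eigen_norm_lt_1[OF leak_if_stubborn_reachable[OF assms] lw_split,
          of "norm mu" "\<lambda>j. norm (a $ j)" i]) auto
  then show ?thesis unfolding rho_def sr .
qed

abbreviation equilibrium :: "real vec \<Rightarrow> real vec" where
  "equilibrium r \<equiv> the (mat_inverse (1\<^sub>m n - A)) *\<^sub>v r"

lemma I_minus_A_affine_iff:
  assumes y: "y \<in> carrier_vec n" and r: "r \<in> carrier_vec n"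
  shows "(1\<^sub>m n - A) *\<^sub>v y = r \<longleftrightarrow> y = A *\<^sub>v y + r"
proof -
  have "(1\<^sub>m n - A) *\<^sub>v y = y - A *\<^sub>v y"
    unfolding minus_mult_distrib_mat_vec[OF one_carrier_mat A_carrier y] using y by simp
  moreover have "y - A *\<^sub>v y = r \<longleftrightarrow> y = A *\<^sub>v y + r"
  proof
    assume h: "y - A *\<^sub>v y = r"
    show "y = A *\<^sub>v y + r"
    proof (rule eq_vecI)
      fix i assume "i < dim_vec (A *\<^sub>v y + r)"
      then show "y $ i = (A *\<^sub>v y + r) $ i"
        using arg_cong[OF h, of "\<lambda>v. v $ i"] y r A_carrier by simp
    qed (use y r A_carrier in simp)
  next
    assume h: "y = A *\<^sub>v y + r"
    show "y - A *\<^sub>v y = r"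
    proof (rule eq_vecI)
      fix i assume "i < dim_vec r"
      then show "(y - A *\<^sub>v y) $ i = r $ i"
        using arg_cong[OF h, of "\<lambda>v. v $ i"] y r A_carrier by simp
    qed (use y r A_carrier in simp)
  qed
  ultimately show ?thesis by simp
qed

lemma affine_fixed_points_eq:
  assumes stubborn_reachable and r: "r \<in> carrier_vec n"
    and y: "y \<in> carrier_vec n" "y = A *\<^sub>v y + r" and z: "z \<in> carrier_vec n" "z = A *\<^sub>v z + r"
  shows "y = z"
proof (rule eq_vecI)
  have yz: "\<forall>i<n. y $ i = (\<Sum>j<n. lw i j * y $ j) + r $ i" "\<forall>i<n. z $ i = (\<Sum>j<n. lw i j * z $ j) + r $ i"
    using A_affine_iff[OF y(1) r] A_affine_iff[OF z(1) r] y(2) z(2) by blast+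
  fix i assume "i < dim_vec z"
  then have "i < n" using z(1) by simp
  from affine_fixed_point_unique[OF leak_if_stubborn_reachable[OF assms(1)] yz(2)[rule_format]
      yz(1)[rule_format] this]
  show "y $ i = z $ i" .
qed (use y z in simp)

lemma mat_inverse_I_minus_A:
  assumes stubborn_reachable
  obtains B where "mat_inverse (1\<^sub>m n - A) = Some B" "B \<in> carrier_mat n n"
    "(1\<^sub>m n - A) * B = 1\<^sub>m n" "B * (1\<^sub>m n - A) = 1\<^sub>m n" "invertible_mat (1\<^sub>m n - A)"
proof -
  have IA: "1\<^sub>m n - A \<in> carrier_mat n n" by (rule minus_carrier_mat[OF A_carrier])
  have det: "det (1\<^sub>m n - A) \<noteq> 0"
  proof
    assume "det (1\<^sub>m n - A) = 0"
    then obtain y where y: "y \<in> carrier_vec n" "y \<noteq> 0\<^sub>v n" "(1\<^sub>m n - A) *\<^sub>v y = 0\<^sub>v n"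
      using det_0_iff_vec_prod_zero[OF IA] by auto
    then have "y = A *\<^sub>v y + 0\<^sub>v n" using I_minus_A_affine_iff[OF y(1) zero_carrier_vec] by blast
    moreover have "A *\<^sub>v 0\<^sub>v n = 0\<^sub>v n" by (rule eq_vecI) (use A_carrier in auto)
    then have "0\<^sub>v n = A *\<^sub>v 0\<^sub>v n + 0\<^sub>v n" by simp
    ultimately show False using affine_fixed_points_eq[OF assms, of "0\<^sub>v n" y "0\<^sub>v n"] y by simp
  qed
  have "mat_inverse (1\<^sub>m n - A) \<noteq> None"
    using mat_inverse(1)[OF IA, of "()"] det_non_zero_imp_unit[OF IA det, of "()"] by auto
  then obtain B where B: "mat_inverse (1\<^sub>m n - A) = Some B" by blast
  from mat_inverse(2)[OF IA B]
  have BB: "(1\<^sub>m n - A) * B = 1\<^sub>m n" "B * (1\<^sub>m n - A) = 1\<^sub>m n" "B \<in> carrier_mat n n" by auto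
  moreover have "invertible_mat (1\<^sub>m n - A)"
    unfolding invertible_mat_def inverts_mat_def using IA BB A_carrier
    by (auto simp: carrier_matD intro!: exI[of _ B])
  ultimately show thesis using that B by blast
qed

lemma equilibrium_iff:
  assumes stubborn_reachable and r: "r \<in> carrier_vec n" and y: "y \<in> carrier_vec n"
  shows "y = A *\<^sub>v y + r \<longleftrightarrow> y = equilibrium r"
proof -
  obtain B where B: "mat_inverse (1\<^sub>m n - A) = Some B" "B \<in> carrier_mat n n"
    "(1\<^sub>m n - A) * B = 1\<^sub>m n" "B * (1\<^sub>m n - A) = 1\<^sub>m n"
    using mat_inverse_I_minus_A[OF assms(1)] by blast
  have IA: "1\<^sub>m n - A \<in> carrier_mat n n" by (rule minus_carrier_mat[OF A_carrier])
  have "(1\<^sub>m n - A) *\<^sub>v y = r \<longleftrightarrow> y = B *\<^sub>v r"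
  proof
    assume "(1\<^sub>m n - A) *\<^sub>v y = r"
    then show "y = B *\<^sub>v r" using assoc_mult_mat_vec[OF B(2) IA y] B(4) y by simp
  next
    assume "y = B *\<^sub>v r"
    then show "(1\<^sub>m n - A) *\<^sub>v y = r" using assoc_mult_mat_vec[OF IA B(2) r] B(3) r by simp
  qed
  then show ?thesis using I_minus_A_affine_iff[OF y r] B(1) by simp
qed

lemma equilibrium_carrier:
  assumes stubborn_reachable and "r \<in> carrier_vec n"
  shows "equilibrium r \<in> carrier_vec n"
proof -
  obtain B where "mat_inverse (1\<^sub>m n - A) = Some B" "B \<in> carrier_mat n n"
    using mat_inverse_I_minus_A[OF assms(1)] by blast
  then show ?thesis using assms(2) by simp
qed

lemma equilibrium_index:
  assumes stubborn_reachable and r: "r \<in> carrier_vec n" and i: "i < n"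
  shows "equilibrium r $ i = (\<Sum>j<n. lw i j * equilibrium r $ j) + r $ i"
proof -
  have x: "equilibrium r \<in> carrier_vec n" by (rule equilibrium_carrier[OF assms(1) r])
  have "equilibrium r = A *\<^sub>v equilibrium r + r" by (simp add: equilibrium_iff[OF assms(1) r x])
  then show ?thesis using A_affine_iff[OF x r] i by blast
qed

lemma fj_tendsto_equilibrium:
  assumes stubborn_reachable and r: "r \<in> carrier_vec n"
    and x: "\<And>t. x t \<in> carrier_vec n" and rec: "\<And>t. x (t + 1) = A *\<^sub>v x t + r" and i: "i < n"
  shows "(\<lambda>t. x t $ i) \<longlonglongrightarrow> equilibrium r $ i"
proof (rule affine_tendsto[OF leak_if_stubborn_reachable[OF assms(1)] _ equilibrium_index[OF assms(1) r] i])
  fix t j assume "j < n"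
  then show "x (Suc t) $ j = (\<Sum>k<n. lw j k * x t $ k) + r $ j"
    using rec[of t] x[of t] r by (simp add: A_mult_vec)
qed

lemma mm_tendsto_equilibrium:
  assumes stubborn_reachable and r: "r \<in> carrier_vec n" and x: "\<And>t. x t \<in> carrier_vec n"
    and rec: "\<And>t. x (t + 2) = L *\<^sub>v (W1 *\<^sub>v x (t + 1) + W2 *\<^sub>v x t) + r" and i: "i < n"
  shows "(\<lambda>t. x t $ i) \<longlonglongrightarrow> equilibrium r $ i"
proof (rule two_step_affine_tendsto[OF leak_if_stubborn_reachable[OF assms(1)] lw_split lw1_nonneg lw2_nonneg
      _ equilibrium_index[OF assms(1) r] i])
  fix t j assume "j < n"
  then show "x (Suc (Suc t)) $ j = (\<Sum>k<n. lw1 j k * x (Suc t) $ k) + (\<Sum>k<n. lw2 j k * x t $ k) + r $ j"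
    using rec[of t] x[of t] x[of "Suc t"] r by (simp add: mm_mult_vec)
qed

lemma mm_equilibrium_iff:
  assumes stubborn_reachable and r: "r \<in> carrier_vec n" and y: "y \<in> carrier_vec n"
  shows "y = L *\<^sub>v (W1 *\<^sub>v y + W2 *\<^sub>v y) + r \<longleftrightarrow> y = equilibrium r"
  unfolding mm_eq_A_mult_vec[OF y] by (rule equilibrium_iff[OF assms])

lemma invertible_I_minus_A:
  assumes stubborn_reachable
  shows "invertible_mat (1\<^sub>m n - A)"
  using mat_inverse_I_minus_A[OF assms] by blast

lemma rho_A_lt_1_iff: "rho A < 1 \<longleftrightarrow> stubborn_reachable"
  using rho_A_lt_1 rho_A_ge_1 by fastforce

lemma rho_Ad_lt_1_iff: "rho Ad < 1 \<longleftrightarrow> stubborn_reachable"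
  using rho_Ad_lt_1 rho_Ad_ge_1 by fastforce

end

theorem theorem1:
  fixes n :: nat and L W1 W2 :: "real mat" and s :: "real vec"
  assumes n_pos: "n > 0"
    and L: "L \<in> carrier_mat n n" and W1: "W1 \<in> carrier_mat n n" and W2: "W2 \<in> carrier_mat n n"
    and s: "s \<in> carrier_vec n"
    and L_diag: "diagonal_mat L"
    and L_range: "\<forall>i<n. 0 \<le> L $$ (i,i) \<and> L $$ (i,i) \<le> 1"
    and W1_nonneg: "nonneg_mat W1" and W2_nonneg: "nonneg_mat W2"
    and W_stoch: "row_stochastic n (W1 + W2)"
  shows
    "(rho (Abar_d n L W1 W2) < 1 \<longleftrightarrow> rho (Abar L W1 W2) < 1)
     \<and> (rho (Abar L W1 W2) < 1 \<longleftrightarrow>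
          ({i. i < n \<and> L $$ (i,i) < 1} \<noteq> {} \<and>
           globally_reachable n (W1 + W2) {i. i < n \<and> L $$ (i,i) < 1}))
     \<and> (rho (Abar L W1 W2) < 1 \<longrightarrow>
          (let xbar = the (mat_inverse (1\<^sub>m n - Abar L W1 W2)) *\<^sub>v ((1\<^sub>m n - L) *\<^sub>v s) in
           invertible_mat (1\<^sub>m n - Abar L W1 W2)
           \<and> (\<forall>x :: nat \<Rightarrow> real vec.
                 (\<forall>t. x t \<in> carrier_vec n) \<and>
                 (\<forall>t. x (t+2) = L *\<^sub>v (W1 *\<^sub>v x (t+1) + W2 *\<^sub>v x t) + (1\<^sub>m n - L) *\<^sub>v s)
                 \<longrightarrow> (\<forall>i<n. (\<lambda>t. x t $ i) \<longlonglongrightarrow> xbar $ i))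
           \<and> (\<forall>x :: nat \<Rightarrow> real vec.
                 (\<forall>t. x t \<in> carrier_vec n) \<and>
                 (\<forall>t. x (t+1) = Abar L W1 W2 *\<^sub>v x t + (1\<^sub>m n - L) *\<^sub>v s)
                 \<longrightarrow> (\<forall>i<n. (\<lambda>t. x t $ i) \<longlonglongrightarrow> xbar $ i))
           \<and> (\<forall>y \<in> carrier_vec n.
                 y = L *\<^sub>v (W1 *\<^sub>v y + W2 *\<^sub>v y) + (1\<^sub>m n - L) *\<^sub>v s \<longleftrightarrow> y = xbar)
           \<and> (\<forall>y \<in> carrier_vec n.
                 y = Abar L W1 W2 *\<^sub>v y + (1\<^sub>m n - L) *\<^sub>v s \<longleftrightarrow> y = xbar)))"
proof -
  interpret fj_mm n L W1 W2
    using n_pos L W1 W2 L_diag L_range W1_nonneg W2_nonneg W_stoch by (simp add: fj_mm_def)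
  have r: "(1\<^sub>m n - L) *\<^sub>v s \<in> carrier_vec n"
    using minus_carrier_mat[OF L] s by (rule mult_mat_vec_carrier)
  show ?thesis
    unfolding Let_def rho_A_lt_1_iff rho_Ad_lt_1_iff
    using invertible_I_minus_A mm_tendsto_equilibrium[OF _ r] fj_tendsto_equilibrium[OF _ r]
      mm_equilibrium_iff[OF _ r] equilibrium_iff[OF _ r]
    by blast
qed

end
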